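(* Let $R_s>0$, $\lambda=2^{R_s}$, and let $\gamma_d,\gamma_e$ be independent, where $\gamma_d$ is generalized-$K$ distributed with $k_d=m_d=1$ and mean $\overline\gamma_d>0$ (CDF $F_{\gamma_d}(x)=G_{1,3}^{2,1}\!\left(\frac{x}{\overline\gamma_d}\,\middle|\,{1\atop 1,1,0}\right)$), and $\gamma_e$ is generalized-$K$ distributed with parameters $k_e>0,m_e>0$ and mean $\overline\gamma_e>0$. Let $\sigma_e^2$ be the variance of $\gamma_e$, $P(x)=F_{\gamma_d}(\lambda-1+\lambda x)$, $\widetilde P_{\rm sop}(\overline\gamma_d):=P(\overline\gamma_e)+\frac{\sigma_e^2}{2}P''(\overline\gamma_e)$, and $a=\lambda-1+\lambda\overline\gamma_e$. Then, as $\overline\gamma_d\to\infty$ with all other parameters fixed, $$\widetilde P_{\rm sop}(\overline\gamma_d)=\overline\gamma_d^{-1}\left(\frac{\psi(1)+\psi(2)-\ln\frac{a}{\overline\gamma_d}}{a^{-1}}-\frac{\overline\gamma_e^2\lambda^2\left(\frac{(k_e+1)(m_e+1)}{k_em_e}-1\right)}{2a}\right)+o(\overline\gamma_d^{-1}).$$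
   Context: $\psi$ is the digamma function and $G^{m,n}_{p,q}$ the standard Meijer G-function. The generalized-$K$ distribution with parameters $k,m$ and mean $\overline\gamma$ is that of $\overline\gamma XY$ with $X,Y$ independent unit-mean Gamma variables of shapes $k$ and $m$ (for $k=m=1$ this is the $K$-distribution). $\widetilde P_{\rm sop}$ is the second-order Taylor approximation of the secrecy outage probability $\mathbb{E}\{F_{\gamma_d}(\lambda-1+\lambda\gamma_e)\}$ around the mean of $\gamma_e$. *)

theory Defs
  imports "HOL-Analysis.Analysis" "HOL-Library.Landau_Symbols"
begin

definition gamma_unit_density :: "real \<Rightarrow> real \<Rightarrow> real" where
  "gamma_unit_density k x =
     (if x > 0 then k powr k * x powr (k - 1) * exp (- k * x) / Gamma k else 0)"

text \<open>CDF of the generalized-K distribution with parameters k, m and mean gbar,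
  i.e. of gbar * X * Y with X, Y independent unit-mean Gamma(k), Gamma(m).\<close>
definition genK_cdf :: "real \<Rightarrow> real \<Rightarrow> real \<Rightarrow> real \<Rightarrow> real" where
  "genK_cdf k m gbar x =
     (LINT u|lborel. LINT v|lborel.
        gamma_unit_density k u * gamma_unit_density m v * indicator {..x} (gbar * u * v))"

definition genK_var :: "real \<Rightarrow> real \<Rightarrow> real \<Rightarrow> real" where
  "genK_var k m gbar =
     (LINT u|lborel. LINT v|lborel.
        gamma_unit_density k u * gamma_unit_density m v * (gbar * u * v - gbar)\<^sup>2)"

definition P_sop_approx :: "real \<Rightarrow> real \<Rightarrow> real \<Rightarrow> real \<Rightarrow> real \<Rightarrow> real" where
  "P_sop_approx Rs ke me ge gd =
     (let lam = 2 powr Rs;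
          P = (\<lambda>x. genK_cdf 1 1 gd (lam - 1 + lam * x))
      in P ge + genK_var ke me ge / 2 * deriv (deriv P) ge)"

end

(* With k_d = m_d = 1 the CDF of gamma_d is F(x) = 1 - G(x / gd), where
   G(t) = int_0^oo exp(-u - t/u) du = E exp(-t/U) for U ~ Exp(1).  Differentiating under the
   integral sign, G' = -H and H' = -K, where H and K carry the extra weights 1/u and 1/u^2.
   An integration by parts gives t K(t) = G(t), so P''(ge) = -(lam/gd)^2 G(t)/t with t = a/gd.
   A second integration by parts, combined with the substitution u -> t/u, gives
   H(t) = 2 J(t) - ln t G(t) with J(t) = int_0^oo ln u exp(-u - t/u) du.  Since
   J(0) = Gamma'(1) = psi(1) and ln t (1 - G(t)) -> 0, we get H(t) = -ln t + 2 psi(1) + o(1), and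
   L'Hopital's rule yields 1 - G(t) = t (psi(1) + psi(2) - ln t) + o(t) as t -> 0+.  Substituting
   t = a/gd, and reading the variance of gamma_e off the first two moments of the Gamma
   distribution, both terms of the approximation have the claimed expansion. *)

theory Submission
  imports Defs "HOL-Real_Asymp.Real_Asymp"
begin

section \<open>Parametric integrals\<close>

lemma integral_dominated_convergence_at_within:
  fixes f :: "'c::first_countable_topology \<Rightarrow> 'a \<Rightarrow> 'b::{banach, second_countable_topology}"
  assumes meas: "\<forall>\<^sub>F t in at x within S. f t \<in> borel_measurable M"
    and "g \<in> borel_measurable M" and "integrable M w"
    and lim: "AE u in M. ((\<lambda>t. f t u) \<longlongrightarrow> g u) (at x within S)"
    and bound: "\<forall>\<^sub>F t in at x within S. AE u in M. norm (f t u) \<le> w u"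
  shows "((\<lambda>t. integral\<^sup>L M (f t)) \<longlongrightarrow> integral\<^sup>L M g) (at x within S)"
  unfolding tendsto_at_iff_sequentially comp_def
proof (intro allI impI)
  fix X :: "nat \<Rightarrow> 'c"
  assume "\<forall>i. X i \<in> S - {x}" and "X \<longlonglongrightarrow> x"
  then have X: "filterlim X (at x within S) sequentially"
    by (simp add: filterlim_at)
  obtain N where N: "\<And>n. N \<le> n \<Longrightarrow>
      f (X n) \<in> borel_measurable M \<and> (AE u in M. norm (f (X n) u) \<le> w u)"
    using filterlim_iff[THEN iffD1, OF X, rule_format, OF eventually_conj[OF meas bound]]
    by (auto simp: eventually_sequentially)
  show "(\<lambda>n. integral\<^sup>L M (f (X n))) \<longlonglongrightarrow> integral\<^sup>L M g"
  proof (rule LIMSEQ_offset[where k = N], rule integral_dominated_convergence[where w = w])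
    show "AE u in M. (\<lambda>n. f (X (n + N)) u) \<longlonglongrightarrow> g u"
      using lim by eventually_elim (intro LIMSEQ_ignore_initial_segment filterlim_compose[OF _ X])
  qed (use N assms in auto)
qed

lemma has_field_derivative_lebesgue_integral:
  fixes f f' :: "real \<Rightarrow> 'a \<Rightarrow> real"
  assumes x: "x \<in> {a<..<b}"
    and int: "\<And>s. s \<in> {a<..<b} \<Longrightarrow> integrable M (f s)"
    and der: "\<And>s u. s \<in> {a<..<b} \<Longrightarrow> ((\<lambda>s. f s u) has_real_derivative f' s u) (at s)"
    and bound: "\<And>s u. s \<in> {a<..<b} \<Longrightarrow> \<bar>f' s u\<bar> \<le> w u"
    and "integrable M w" and "f' x \<in> borel_measurable M"
  shows "((\<lambda>s. integral\<^sup>L M (f s)) has_real_derivative integral\<^sup>L M (f' x)) (at x)"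
proof -
  define q where "q y u = (f y u - f x u) / (y - x)" for y u
  have near: "\<forall>\<^sub>F y in at x. y \<in> {a<..<b}"
    using x by (intro eventually_at_in_open') auto
  have q_bound: "\<bar>q y u\<bar> \<le> w u" if y: "y \<in> {a<..<b}" "y \<noteq> x" for y u
  proof -
    have "\<bar>f y u - f x u\<bar> \<le> w u * \<bar>y - x\<bar>"
      using field_differentiable_bound[of "{a<..<b}" "\<lambda>s. f s u" "\<lambda>s. f' s u" "w u" y x]
        der bound x y by (auto intro: has_field_derivative_at_within)
    then show ?thesis
      using y by (simp add: q_def abs_divide divide_le_eq)
  qed
  have "((\<lambda>y. integral\<^sup>L M (q y)) \<longlongrightarrow> integral\<^sup>L M (f' x)) (at x)"
  proof (rule integral_dominated_convergence_at_within[where w = w])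
    show "\<forall>\<^sub>F y in at x. q y \<in> borel_measurable M"
      using near by eventually_elim
        (auto simp: q_def[abs_def] intro!: borel_measurable_divide borel_measurable_diff
          intro: borel_measurable_integrable[OF int] x)
    show "AE u in M. ((\<lambda>y. q y u) \<longlongrightarrow> f' x u) (at x)"
      using der[OF x] by (simp add: q_def has_field_derivative_iff)
    show "\<forall>\<^sub>F y in at x. AE u in M. norm (q y u) \<le> w u"
      using eventually_conj[OF near eventually_neq_at_within[of x x UNIV]]
      by eventually_elim (use q_bound in auto)
  qed (use assms in auto)
  moreover have "\<forall>\<^sub>F y in at x.
      integral\<^sup>L M (q y) = (integral\<^sup>L M (f y) - integral\<^sup>L M (f x)) / (y - x)"
    using near by eventually_elim (use x in \<open>simp add: q_def[abs_def] int\<close>)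
  ultimately show ?thesis
    unfolding has_field_derivative_iff by (rule Lim_transform_eventually)
qed

lemma integral_FTC_Ioi_vanishing:
  fixes F f :: "real \<Rightarrow> real"
  assumes der: "\<And>u. 0 < u \<Longrightarrow> (F has_real_derivative f u) (at u)"
    and cont: "\<And>u. 0 < u \<Longrightarrow> isCont f u"
    and int: "integrable lborel (\<lambda>u. indicator {0<..} u * f u)"
    and "(F \<longlongrightarrow> 0) (at_right 0)" and "(F \<longlongrightarrow> 0) at_top"
  shows "(LINT u|lborel. indicator {0<..} u * f u) = 0"
proof -
  have "(LBINT u=ereal 0..\<infinity>. f u) = 0 - 0"
    by (rule interval_integral_FTC_integrable[where F = F])
       (use assms in \<open>auto simp: has_real_derivative_iff_has_vector_derivative[symmetric]
          set_integrable_def ereal_tendsto_simps1\<close>)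
  then show ?thesis
    by (simp add: interval_integral_to_infinity_eq set_lebesgue_integral_def)
qed

lemma integral_Ioi_inversion:
  fixes f :: "real \<Rightarrow> real"
  assumes c: "c > 0"
    and f: "integrable lborel (\<lambda>u. indicator {0<..} u * f u)"
    and g: "integrable lborel (\<lambda>w. indicator {0<..} w * (c / w\<^sup>2 * f (c / w)))"
  shows "(LINT w|lborel. indicator {0<..} w * (c / w\<^sup>2 * f (c / w))) = (LINT u|lborel. indicator {0<..} u * f u)"
proof -
  have hk: "integral {0<..} h = (LINT u|lborel. indicator {0<..} u * h u)"
    "h absolutely_integrable_on {0<..}"
    if "integrable lborel (\<lambda>u. indicator {0<..} u * h u)" for h :: "real \<Rightarrow> real"
    using that set_borel_integral_eq_integral(2)[of "{0<..}" h]
    by (auto simp: set_integrable_def set_lebesgue_integral_def absolutely_integrable_measurable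
        integrable_completion borel_measurable_integrable)
  have der: "((\<lambda>w. c / w) has_real_derivative - c / w\<^sup>2) (at w within {0<..})" if "w \<in> {0<..}" for w
    using that by (auto intro!: derivative_eq_intros simp: power2_eq_square)
  have inj: "inj_on (\<lambda>w. c / w) {0<..}"
    using c by (auto simp: inj_on_def)
  have img: "(\<lambda>w. c / w) ` {0<..} = {0<..}"
    using c by (auto simp: image_iff intro!: bexI[where x = "c / _"])
  have "integral {0<..} (\<lambda>w. \<bar>- c / w\<^sup>2\<bar> * f (c / w)) = integral {0<..} f"
    using has_absolute_integral_change_of_variables_1'[OF _ der inj, of f "integral {0<..} f"]
      img hk(2)[OF f] by auto
  moreover have "integral {0<..} (\<lambda>w. \<bar>- c / w\<^sup>2\<bar> * f (c / w))
      = integral {0<..} (\<lambda>w. c / w\<^sup>2 * f (c / w))"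
    using c by (intro integral_cong) simp
  ultimately show ?thesis
    using hk(1)[OF f] hk(1)[OF g] by simp
qed

lemma exp_ge_power_div_fact:
  fixes x :: real
  assumes "0 \<le> x"
  shows "x ^ n / fact n \<le> exp x"
proof -
  have "(\<Sum>k\<in>{n}. x ^ k /\<^sub>R fact k) \<le> (\<Sum>k. x ^ k /\<^sub>R fact k)"
    using assms by (intro sum_le_suminf summable_exp_generic) auto
  then show ?thesis
    by (simp add: exp_def divide_inverse mult.commute)
qed

lemma exp_neg_div_over_power_le:
  fixes u c :: real
  assumes "u > 0" "c > 0"
  shows "exp (- c / u) / u ^ n \<le> fact n / c ^ n"
proof -
  have "(c / u) ^ n / fact n \<le> exp (c / u)"
    using assms by (intro exp_ge_power_div_fact) simp
  then show ?thesis
    using assms by (simp add: field_simps power_divide exp_minus)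
qed

lemma exp_minus_minus_div: "exp (- u - t / u) = exp (- u) * exp (- t / u)" for u t :: real
  by (simp add: exp_add[symmetric])

lemma one_minus_exp_neg_le_sqrt:
  fixes x :: real
  assumes "x \<ge> 0"
  shows "1 - exp (-x) \<le> sqrt x"
proof (cases "x \<ge> 1")
  case False
  then have "x \<le> sqrt x"
    using assms by (intro real_le_rsqrt) (simp add: power2_eq_square mult_left_le_one_le)
  then show ?thesis
    using exp_ge_add_one_self[of "-x"] by linarith
next
  case True
  then have "1 \<le> sqrt x"
    by simp
  then show ?thesis
    using exp_gt_zero[of "-x"] by linarith
qed

lemma abs_ln_le_plus_inverse:
  fixes u :: real
  assumes "u > 0"
  shows "\<bar>ln u\<bar> \<le> u + 1 / u"
  using ln_le_minus_one[OF assms] ln_le_minus_one[of "1 / u"] assms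
  by (auto simp: ln_div abs_if add_increasing2)

lemma minus_ln_le_powr: "u > 0 \<Longrightarrow> - ln u \<le> 2 * u powr (-1/2)" for u :: real
  using ln_le_minus_one[of "u powr (-1/2)"] by (simp add: ln_powr)

lemma abs_ln_mult_powr_le:
  fixes u s :: real
  assumes u: "u > 0" and s: "3/4 \<le> s" "s \<le> 5/4"
  shows "\<bar>ln u\<bar> * u powr (s - 1) \<le> u powr (5/4) + 2 * u powr (-3/4)"
proof (cases "u \<ge> 1")
  case True
  have "\<bar>ln u\<bar> * u powr (s - 1) \<le> u * u powr (1/4)"
    using True s ln_bound[OF u] by (intro mult_mono powr_mono) auto
  also have "\<dots> = u powr (5/4)"
    using u by (simp add: powr_mult_base)
  finally show ?thesis
    by (simp add: add_increasing2)
next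
  case False
  have "\<bar>ln u\<bar> * u powr (s - 1) \<le> 2 * u powr (-1/2) * u powr (-1/4)"
    using False s u minus_ln_le_powr[OF u] by (intro mult_mono powr_mono') auto
  also have "\<dots> = 2 * u powr (-3/4)"
    using u by (simp add: powr_add[symmetric])
  finally show ?thesis
    by (simp add: add_increasing)
qed

section \<open>Gamma integrals\<close>

lemma Gamma_lborel_integral:
  fixes p :: real
  assumes p: "p > 0"
  shows "integrable lborel (\<lambda>u. indicator {0<..} u * (u powr (p - 1) * exp (-u)))"
    and "(LINT u|lborel. indicator {0<..} u * (u powr (p - 1) * exp (-u))) = Gamma p"
proof -
  let ?g = "\<lambda>u::real. indicator {0<..} u * (u powr (p - 1) * exp (-u))"
  have nonneg: "AE u in lborel. 0 \<le> ?g u"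
    by (auto simp: indicator_def)
  have "(\<integral>\<^sup>+u. ennreal (indicator {0..} u * u powr (p - 1) / exp u) \<partial>lborel)
      = (\<integral>\<^sup>+u. ennreal (?g u) \<partial>lborel)"
    by (intro nn_integral_cong) (auto simp: indicator_def exp_minus field_simps)
  then have nn: "(\<integral>\<^sup>+u. ennreal (?g u) \<partial>lborel) = ennreal (Gamma p)"
    using Gamma_conv_nn_integral_real[OF p] by simp
  show int: "integrable lborel ?g"
    by (rule integrableI_nonneg[OF _ nonneg]) (simp_all add: nn)
  show "integral\<^sup>L lborel ?g = Gamma p"
    using integral_eq_nn_integral[OF _ nonneg] nn Gamma_real_pos[OF p] by simp
qed

lemma integrable_exp_Ioi: "integrable lborel (\<lambda>u::real. indicator {0<..} u * exp (-u))"
  and integral_exp_Ioi: "(LINT u|lborel. indicator {0<..} u * exp (-u::real)) = 1"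
proof -
  have "(\<lambda>u::real. indicator {0<..} u * (u powr (1 - 1) * exp (-u))) = (\<lambda>u. indicator {0<..} u * exp (-u))"
    by (auto simp: indicator_def)
  then show "integrable lborel (\<lambda>u::real. indicator {0<..} u * exp (-u))"
    and "(LINT u|lborel. indicator {0<..} u * exp (-u::real)) = 1"
    using Gamma_lborel_integral[of 1] by simp_all
qed

lemma integral_exp_Ioc:
  fixes c :: real
  assumes "c \<ge> 0"
  shows "(LINT v|lborel. indicator {0<..c} v * exp (-v)) = 1 - exp (-c)"
proof -
  have "(LINT v|lborel. indicator {0..c} v *\<^sub>R exp (-v)) = - exp (-c) - - exp (-0)"
    by (rule integral_FTC_atLeastAtMost[OF assms])
       (auto intro!: derivative_eq_intros continuous_intros
         simp: has_real_derivative_iff_has_vector_derivative[symmetric])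
  moreover have "(LINT v|lborel. indicator {0<..c} v * exp (-v)) = (LINT v|lborel. indicator {0..c} v *\<^sub>R exp (-v))"
    by (intro integral_cong_AE) (auto intro!: eventually_mono[OF AE_lborel_singleton[of 0]] simp: indicator_def)
  ultimately show ?thesis
    by simp
qed

lemma integral_exp_div_sqrt_Ioi:
  "integrable lborel (\<lambda>u::real. indicator {0<..} u * (exp (-u) / sqrt u))"
  "(LINT u|lborel. indicator {0<..} u * (exp (-u) / sqrt u)) = sqrt pi"
proof -
  have "u powr (1/2 - 1) = 1 / sqrt u" if "u > 0" for u :: real
  proof -
    have "(1/2 - 1 :: real) = - (1/2)"
      by simp
    then show ?thesis
      using that by (simp only: powr_minus_divide powr_half_sqrt less_imp_le)
  qed
  then have "(\<lambda>u::real. indicator {0<..} u * (u powr (1/2 - 1) * exp (-u)))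
      = (\<lambda>u. indicator {0<..} u * (exp (-u) / sqrt u))"
    by (auto simp: indicator_def fun_eq_iff)
  then show "integrable lborel (\<lambda>u::real. indicator {0<..} u * (exp (-u) / sqrt u))"
    "(LINT u|lborel. indicator {0<..} u * (exp (-u) / sqrt u)) = sqrt pi"
    using Gamma_lborel_integral[of "1/2"] by (simp_all add: Gamma_one_half_real)
qed

lemma integrable_Ioi_exp_bound:
  fixes f :: "real \<Rightarrow> real"
  assumes "f \<in> borel_measurable lborel" and "\<And>u. u > 0 \<Longrightarrow> \<bar>f u\<bar> \<le> C * exp (-u)"
  shows "integrable lborel (\<lambda>u. indicator {0<..} u * f u)"
  by (rule Bochner_Integration.integrable_bound[OF integrable_mult_right[OF integrable_exp_Ioi, of C]])
     (use assms in \<open>auto simp: indicator_def abs_mult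
        intro!: AE_I2 order_trans[OF _ mult_right_mono[OF abs_ge_self]]\<close>)

lemma integrable_log_Gamma_dominant:
  "integrable lborel (\<lambda>u::real. indicator {0<..} u * ((u powr (5/4) + 2 * u powr (-3/4)) * exp (-u)))"
proof -
  have "integrable lborel (\<lambda>u::real. indicator {0<..} u * (u powr (9/4 - 1) * exp (-u))
      + 2 * (indicator {0<..} u * (u powr (1/4 - 1) * exp (-u))))"
    by (intro Bochner_Integration.integrable_add integrable_mult_right Gamma_lborel_integral) auto
  then show ?thesis
    by (simp add: algebra_simps)
qed

section \<open>Bessel-type integrals\<close>

(* For t > 0, bessel_integral n t = 2 t^((1-n)/2) K_(1-n)(2 sqrt t), where K_nu is the modified
   Bessel function of the second kind. *)
definition bessel_integral :: "nat \<Rightarrow> real \<Rightarrow> real" where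
  "bessel_integral n t = (LINT u|lborel. indicator {0<..} u * (exp (-u - t/u) / u ^ n))"

definition log_bessel_integral :: "nat \<Rightarrow> real \<Rightarrow> real" where
  "log_bessel_integral n t = (LINT u|lborel. indicator {0<..} u * (ln u * exp (-u - t/u) / u ^ n))"

lemma integrable_bessel_integrand:
  fixes t :: real
  assumes t: "t > 0"
  shows "integrable lborel (\<lambda>u. indicator {0<..} u * (exp (-u - t/u) / u ^ n))"
proof (rule integrable_Ioi_exp_bound[where C = "fact n / t ^ n"])
  fix u :: real
  assume u: "u > 0"
  have "exp (-u - t/u) / u ^ n = exp (-u) * (exp (- t / u) / u ^ n)"
    by (simp add: exp_minus_minus_div)
  also have "\<dots> \<le> exp (-u) * (fact n / t ^ n)"
    using exp_neg_div_over_power_le[OF u t] by (intro mult_left_mono) auto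
  finally show "\<bar>exp (-u - t/u) / u ^ n\<bar> \<le> fact n / t ^ n * exp (-u)"
    using u by (simp add: mult.commute)
qed measurable

lemma integrable_log_bessel_integrand:
  fixes t :: real
  assumes t: "t > 0"
  shows "integrable lborel (\<lambda>u. indicator {0<..} u * (ln u * exp (-u - t/u) / u ^ Suc n))"
proof (rule integrable_Ioi_exp_bound[where C = "fact n / t ^ n + fact (n + 2) / t ^ (n + 2)"])
  fix u :: real
  assume u: "u > 0"
  have "\<bar>ln u * exp (-u - t/u) / u ^ Suc n\<bar> \<le> (u + 1 / u) * exp (-u - t/u) / u ^ Suc n"
    using abs_ln_le_plus_inverse[OF u] u by (simp add: abs_mult divide_right_mono mult_right_mono)
  also have "\<dots> = exp (-u) * (exp (- t / u) / u ^ n + exp (- t / u) / u ^ (n + 2))"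
    unfolding exp_minus_minus_div using u by (simp add: field_simps)
  also have "\<dots> \<le> exp (-u) * (fact n / t ^ n + fact (n + 2) / t ^ (n + 2))"
    by (intro mult_left_mono add_mono exp_neg_div_over_power_le[OF u t]) auto
  finally show "\<bar>ln u * exp (-u - t/u) / u ^ Suc n\<bar> \<le> (fact n / t ^ n + fact (n + 2) / t ^ (n + 2)) * exp (-u)"
    by (simp add: mult.commute)
qed measurable

lemma integrable_log_bessel_integrand_0:
  fixes t :: real
  assumes "t \<ge> 0"
  shows "integrable lborel (\<lambda>u. indicator {0<..} u * (ln u * exp (-u - t/u)))"
proof (rule Bochner_Integration.integrable_bound[OF integrable_log_Gamma_dominant])
  show "AE u in lborel. norm (indicator {0<..} u * (ln u * exp (-u - t/u)))
      \<le> norm (indicator {0<..} u * ((u powr (5/4) + 2 * u powr (-3/4)) * exp (-u)))"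
  proof (rule AE_I2)
    fix u :: real
    show "norm (indicator {0<..} u * (ln u * exp (-u - t/u)))
      \<le> norm (indicator {0<..} u * ((u powr (5/4) + 2 * u powr (-3/4)) * exp (-u)))"
    proof (cases "u > 0")
      case True
      have "\<bar>ln u\<bar> * exp (-u - t/u) \<le> (u powr (5/4) + 2 * u powr (-3/4)) * exp (-u)"
        using abs_ln_mult_powr_le[OF True, of 1] True assms
        by (intro mult_mono) (auto simp: divide_nonneg_pos)
      then show ?thesis
        using True by (simp add: abs_mult)
    qed simp
  qed
qed measurable

lemma bessel_integral_deriv:
  assumes t: "t > 0"
  shows "(bessel_integral n has_real_derivative - bessel_integral (Suc n) t) (at t)"
proof -
  have "((\<lambda>s. LINT u|lborel. indicator {0<..} u * (exp (-u - s/u) / u ^ n)) has_real_derivative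
      (LINT u|lborel. - (indicator {0<..} u * (exp (-u - t/u) / u ^ Suc n)))) (at t)"
  proof (rule has_field_derivative_lebesgue_integral[where a = "t/2" and b = "2*t"
        and w = "\<lambda>u. indicator {0<..} u * (exp (-u - (t/2)/u) / u ^ Suc n)"])
    show "((\<lambda>s. indicator {0<..} u * (exp (-u - s/u) / u ^ n)) has_real_derivative
        - (indicator {0<..} u * (exp (-u - s/u) / u ^ Suc n))) (at s)" for s u :: real
      by (cases "u > 0") (auto intro!: derivative_eq_intros simp: field_simps)
    show "\<bar>- (indicator {0<..} u * (exp (-u - s/u) / u ^ Suc n))\<bar>
        \<le> indicator {0<..} u * (exp (-u - (t/2)/u) / u ^ Suc n)" if "s \<in> {t/2<..<2*t}" for s u :: real
    proof (cases "u > 0")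
      case True
      then have "(t/2) / u \<le> s / u"
        using that by (intro divide_right_mono) auto
      then show ?thesis
        using True by (auto intro!: divide_right_mono)
    qed simp
    show "integrable lborel (\<lambda>u. indicator {0<..} u * (exp (-u - s/u) / u ^ n))"
      if "s \<in> {t/2<..<2*t}" for s
      using that t by (intro integrable_bessel_integrand) auto
    show "integrable lborel (\<lambda>u. indicator {0<..} u * (exp (-u - (t/2)/u) / u ^ Suc n))"
      using t by (intro integrable_bessel_integrand) auto
  qed (use t in auto)
  then show ?thesis
    by (simp add: bessel_integral_def[abs_def])
qed

lemma bessel_integral_2_eq:
  fixes t :: real
  assumes t: "t > 0"
  shows "t * bessel_integral 2 t = bessel_integral 0 t"
proof -
  let ?K = "\<lambda>u. indicator {0<..} u * (exp (-u - t/u) / u\<^sup>2)"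
  let ?G = "\<lambda>u. indicator {0<..} u * exp (-u - t/u)"
  have iK: "integrable lborel ?K"
    by (rule integrable_bessel_integrand[OF t])
  have iG: "integrable lborel ?G"
    using integrable_bessel_integrand[OF t, of 0] by simp
  have eq: "(\<lambda>u. indicator {0<..} u * (t * (exp (-u - t/u) / u\<^sup>2) - exp (-u - t/u))) = (\<lambda>u. t * ?K u - ?G u)"
    by (simp add: fun_eq_iff algebra_simps)
  have "(LINT u|lborel. indicator {0<..} u * (t * (exp (-u - t/u) / u\<^sup>2) - exp (-u - t/u))) = 0"
  proof (rule integral_FTC_Ioi_vanishing[where F = "\<lambda>u. exp (-u - t/u)"])
    show "((\<lambda>u. exp (-u - t/u)) has_real_derivative t * (exp (-u - t/u) / u\<^sup>2) - exp (-u - t/u)) (at u)"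
      if "0 < u" for u
      using that by (auto intro!: derivative_eq_intros simp: field_simps power2_eq_square)
    show "integrable lborel (\<lambda>u. indicator {0<..} u * (t * (exp (-u - t/u) / u\<^sup>2) - exp (-u - t/u)))"
      unfolding eq by (intro Bochner_Integration.integrable_diff integrable_mult_right iK iG)
    show "((\<lambda>u. exp (-u - t/u)) \<longlongrightarrow> 0) (at_right 0)"
      and "((\<lambda>u. exp (-u - t/u)) \<longlongrightarrow> 0) at_top"
      using t by real_asymp+
  qed (auto intro!: continuous_intros)
  then show ?thesis
    unfolding eq Bochner_Integration.integral_diff[OF integrable_mult_right[OF iK] iG]
      integral_mult_right_zero
    by (simp add: bessel_integral_def)
qed

lemma log_bessel_integral_by_parts:
  fixes t :: real
  assumes t: "t > 0"
  shows "bessel_integral 1 t + t * log_bessel_integral 2 t = log_bessel_integral 0 t"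
proof -
  let ?H = "\<lambda>u. indicator {0<..} u * (exp (-u - t/u) / u)"
  let ?L = "\<lambda>u. indicator {0<..} u * (ln u * exp (-u - t/u) / u\<^sup>2)"
  let ?J = "\<lambda>u. indicator {0<..} u * (ln u * exp (-u - t/u))"
  let ?f = "\<lambda>u. exp (-u - t/u) / u + t * (ln u * exp (-u - t/u) / u\<^sup>2) - ln u * exp (-u - t/u)"
  have iH: "integrable lborel ?H"
    using integrable_bessel_integrand[OF t, of 1] by simp
  have iL: "integrable lborel ?L"
    using integrable_log_bessel_integrand[OF t, of 1] by (simp add: numeral_2_eq_2)
  have iJ: "integrable lborel ?J"
    using t by (intro integrable_log_bessel_integrand_0) simp
  have eq: "(\<lambda>u. indicator {0<..} u * ?f u) = (\<lambda>u. ?H u + t * ?L u - ?J u)"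
    by (simp add: fun_eq_iff algebra_simps)
  have "(LINT u|lborel. indicator {0<..} u * ?f u) = 0"
  proof (rule integral_FTC_Ioi_vanishing[where F = "\<lambda>u. ln u * exp (-u - t/u)"])
    show "((\<lambda>u. ln u * exp (-u - t/u)) has_real_derivative ?f u) (at u)" if "0 < u" for u
      using that by (auto intro!: derivative_eq_intros simp: field_simps power2_eq_square)
    show "integrable lborel (\<lambda>u. indicator {0<..} u * ?f u)"
      unfolding eq
      by (intro Bochner_Integration.integrable_diff Bochner_Integration.integrable_add
          integrable_mult_right iH iL iJ)
    show "((\<lambda>u. ln u * exp (-u - t/u)) \<longlongrightarrow> 0) (at_right 0)"
      and "((\<lambda>u. ln u * exp (-u - t/u)) \<longlongrightarrow> 0) at_top"
      using t by real_asymp+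
  qed (auto intro!: continuous_intros)
  then show ?thesis
    unfolding eq Bochner_Integration.integral_diff[OF Bochner_Integration.integrable_add[OF iH
        integrable_mult_right[OF iL]] iJ]
      Bochner_Integration.integral_add[OF iH integrable_mult_right[OF iL]] integral_mult_right_zero
    by (simp add: bessel_integral_def log_bessel_integral_def)
qed

lemma log_bessel_integral_2_inversion:
  fixes t :: real
  assumes t: "t > 0"
  shows "t * log_bessel_integral 2 t = ln t * bessel_integral 0 t - log_bessel_integral 0 t"
proof -
  let ?f = "\<lambda>u. ln u * exp (-u - t/u) / u\<^sup>2"
  let ?G = "\<lambda>u. indicator {0<..} u * exp (-u - t/u)"
  let ?J = "\<lambda>u. indicator {0<..} u * (ln u * exp (-u - t/u))"
  have iL: "integrable lborel (\<lambda>u. indicator {0<..} u * ?f u)"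
    using integrable_log_bessel_integrand[OF t, of 1] by (simp add: numeral_2_eq_2)
  have iG: "integrable lborel ?G"
    using integrable_bessel_integrand[OF t, of 0] by simp
  have iJ: "integrable lborel ?J"
    using t by (intro integrable_log_bessel_integrand_0) simp
  have eq: "(\<lambda>w. indicator {0<..} w * (t / w\<^sup>2 * ?f (t / w))) = (\<lambda>w. (ln t * ?G w - ?J w) / t)"
  proof
    fix w :: real
    show "indicator {0<..} w * (t / w\<^sup>2 * ?f (t / w)) = (ln t * ?G w - ?J w) / t"
    proof (cases "w > 0")
      case True
      have "t / (t / w) = w" "ln (t / w) = ln t - ln w" "exp (- (t / w) - w) = exp (- w - t / w)"
        using t True by (simp_all add: ln_div)
      then show ?thesis
        using t True by (simp only:) (simp add: field_simps power2_eq_square)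
    qed simp
  qed
  have "(LINT w|lborel. indicator {0<..} w * (t / w\<^sup>2 * ?f (t / w))) = (LINT u|lborel. indicator {0<..} u * ?f u)"
    by (rule integral_Ioi_inversion[OF t iL])
       (unfold eq, intro integrable_divide_zero Bochner_Integration.integrable_diff
         integrable_mult_right iG iJ)
  then have "(ln t * bessel_integral 0 t - log_bessel_integral 0 t) / t = log_bessel_integral 2 t"
    unfolding eq integral_divide_zero Bochner_Integration.integral_diff[OF integrable_mult_right[OF iG] iJ]
      integral_mult_right_zero
    by (simp add: bessel_integral_def log_bessel_integral_def)
  then show ?thesis
    using t by (simp add: field_simps)
qed

lemma bessel_integral_1_eq:
  "t > 0 \<Longrightarrow> bessel_integral 1 t = 2 * log_bessel_integral 0 t - ln t * bessel_integral 0 t"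
  using log_bessel_integral_by_parts log_bessel_integral_2_inversion by fastforce

lemma bessel_integral_0_at_right_0: "(bessel_integral 0 \<longlongrightarrow> 1) (at_right 0)"
proof -
  have "(bessel_integral 0 \<longlongrightarrow> bessel_integral 0 0) (at_right 0)"
    unfolding bessel_integral_def[abs_def] power_0 div_by_1
  proof (rule integral_dominated_convergence_at_within[where w = "\<lambda>u. indicator {0<..} u * exp (-u)"])
    show "AE u in lborel. ((\<lambda>t. indicator {0<..} u * exp (-u - t/u))
        \<longlongrightarrow> indicator {0<..} u * exp (-u - 0/u)) (at_right (0::real))"
    proof (rule AE_I2)
      fix u :: real
      show "((\<lambda>t. indicator {0<..} u * exp (-u - t/u)) \<longlongrightarrow> indicator {0<..} u * exp (-u - 0/u)) (at_right 0)"
        by (cases "u = 0") (auto intro!: tendsto_eq_intros)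
    qed
    show "\<forall>\<^sub>F t in at_right 0. AE u in lborel. norm (indicator {0<..} u * exp (-u - t/u))
        \<le> indicator {0<..} u * exp (-u)"
      by (intro eventually_at_rightI[of 0 1] AE_I2) (auto simp: indicator_def)
  qed (simp_all add: integrable_exp_Ioi)
  moreover have "bessel_integral 0 0 = 1"
    using integral_exp_Ioi by (simp add: bessel_integral_def)
  ultimately show ?thesis
    by simp
qed

lemma log_bessel_integral_0_0: "log_bessel_integral 0 0 = Digamma 1"
proof -
  let ?f = "\<lambda>s u::real. indicator {0<..} u * (u powr (s - 1) * exp (-u))"
  let ?f' = "\<lambda>s u::real. indicator {0<..} u * (ln u * u powr (s - 1) * exp (-u))"
  have "((\<lambda>s. integral\<^sup>L lborel (?f s)) has_real_derivative integral\<^sup>L lborel (?f' 1)) (at 1)"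
  proof (rule has_field_derivative_lebesgue_integral[where a = "3/4" and b = "5/4" and f' = ?f'
        and w = "\<lambda>u. indicator {0<..} u * ((u powr (5/4) + 2 * u powr (-3/4)) * exp (-u))"])
    show "((\<lambda>s. ?f s u) has_real_derivative ?f' s u) (at s)" for s u
      by (cases "u > 0") (auto intro!: derivative_eq_intros)
    show "\<bar>?f' s u\<bar> \<le> indicator {0<..} u * ((u powr (5/4) + 2 * u powr (-3/4)) * exp (-u))"
      if "s \<in> {3/4<..<5/4}" for s u
      using that abs_ln_mult_powr_le[of u s]
      by (cases "u > 0") (auto simp: abs_mult intro!: mult_right_mono)
    show "integrable lborel (\<lambda>u::real. indicator {0<..} u * ((u powr (5/4) + 2 * u powr (-3/4)) * exp (-u)))"
      by (rule integrable_log_Gamma_dominant)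
    show "integrable lborel (?f s)" if "s \<in> {3/4<..<5/4}" for s
      using that by (intro Gamma_lborel_integral) simp
    show "?f' 1 \<in> borel_measurable lborel"
      by measurable
  qed simp
  moreover have "((\<lambda>s. integral\<^sup>L lborel (?f s)) has_real_derivative Gamma 1 * Digamma 1) (at 1)"
    by (rule has_field_derivative_transform_within_open[OF has_field_derivative_Gamma, of _ "{0<..}"])
       (simp_all add: Gamma_lborel_integral)
  ultimately have "integral\<^sup>L lborel (?f' 1) = Gamma 1 * Digamma 1"
    by (rule DERIV_unique)
  moreover have "integral\<^sup>L lborel (?f' 1) = log_bessel_integral 0 0"
    unfolding log_bessel_integral_def by (intro Bochner_Integration.integral_cong) (auto simp: indicator_def)
  ultimately show ?thesis
    by simp
qed

lemma log_bessel_integral_0_at_right_0: "(log_bessel_integral 0 \<longlongrightarrow> Digamma 1) (at_right 0)"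
proof -
  have "(log_bessel_integral 0 \<longlongrightarrow> log_bessel_integral 0 0) (at_right 0)"
    unfolding log_bessel_integral_def[abs_def] power_0 div_by_1
  proof (rule integral_dominated_convergence_at_within[where w = "\<lambda>u. indicator {0<..} u * \<bar>ln u * exp (-u)\<bar>"])
    show "AE u in lborel. ((\<lambda>t. indicator {0<..} u * (ln u * exp (-u - t/u)))
        \<longlongrightarrow> indicator {0<..} u * (ln u * exp (-u - 0/u))) (at_right (0::real))"
    proof (rule AE_I2)
      fix u :: real
      show "((\<lambda>t. indicator {0<..} u * (ln u * exp (-u - t/u)))
          \<longlongrightarrow> indicator {0<..} u * (ln u * exp (-u - 0/u))) (at_right 0)"
        by (cases "u = 0") (auto intro!: tendsto_eq_intros)
    qed
    show "\<forall>\<^sub>F t in at_right 0. AE u in lborel. norm (indicator {0<..} u * (ln u * exp (-u - t/u)))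
        \<le> indicator {0<..} u * \<bar>ln u * exp (-u)\<bar>"
      by (intro eventually_at_rightI[of 0 1] AE_I2) (auto simp: indicator_def abs_mult intro!: mult_left_mono)
    show "integrable lborel (\<lambda>u::real. indicator {0<..} u * \<bar>ln u * exp (-u)\<bar>)"
      using integrable_abs[OF integrable_log_bessel_integrand_0[of 0]] by (simp add: abs_mult)
  qed simp_all
  then show ?thesis
    by (simp only: log_bessel_integral_0_0)
qed

lemma abs_one_minus_bessel_integral_0_le:
  fixes t :: real
  assumes t: "t > 0"
  shows "\<bar>1 - bessel_integral 0 t\<bar> \<le> sqrt pi * sqrt t"
proof -
  let ?G = "\<lambda>u. indicator {0<..} u * exp (-u - t/u)"
  have iG: "integrable lborel ?G"
    using integrable_bessel_integrand[OF t, of 0] by simp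
  have "1 - bessel_integral 0 t = (LINT u|lborel. indicator {0<..} u * exp (-u) - ?G u)"
    using iG by (simp add: bessel_integral_def integrable_exp_Ioi integral_exp_Ioi)
  also have "\<bar>\<dots>\<bar> \<le> (LINT u|lborel. sqrt t * (indicator {0<..} u * (exp (-u) / sqrt u)))"
    unfolding real_norm_def[symmetric]
  proof (rule Bochner_Integration.integral_norm_bound_integral)
    show "integrable lborel (\<lambda>u. indicator {0<..} u * exp (-u) - ?G u)"
      by (intro Bochner_Integration.integrable_diff integrable_exp_Ioi iG)
    show "integrable lborel (\<lambda>u. sqrt t * (indicator {0<..} u * (exp (-u) / sqrt u)))"
      by (intro integrable_mult_right integral_exp_div_sqrt_Ioi)
    fix u :: real
    show "norm (indicator {0<..} u * exp (-u) - ?G u) \<le> sqrt t * (indicator {0<..} u * (exp (-u) / sqrt u))"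
    proof (cases "u > 0")
      case True
      have "norm (indicator {0<..} u * exp (-u) - ?G u) = exp (-u) * (1 - exp (- t / u))"
        using t True by (simp add: exp_minus_minus_div right_diff_distrib)
      also have "\<dots> \<le> exp (-u) * sqrt (t / u)"
        using one_minus_exp_neg_le_sqrt[of "t / u"] t True by (intro mult_left_mono) simp_all
      also have "\<dots> = sqrt t * (indicator {0<..} u * (exp (-u) / sqrt u))"
        using True by (simp add: real_sqrt_divide)
      finally show ?thesis .
    qed simp
  qed
  also have "\<dots> = sqrt pi * sqrt t"
    unfolding integral_mult_right_zero integral_exp_div_sqrt_Ioi(2) by (rule mult.commute)
  finally show ?thesis .
qed

lemma ln_mult_one_minus_bessel_integral_0_at_right_0:
  "((\<lambda>t. ln t * (1 - bessel_integral 0 t)) \<longlongrightarrow> 0) (at_right 0)"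
proof (rule Lim_null_comparison)
  show "\<forall>\<^sub>F t in at_right 0. norm (ln t * (1 - bessel_integral 0 t)) \<le> sqrt pi * (\<bar>ln t\<bar> * sqrt t)"
  proof (rule eventually_at_rightI[of 0 1])
    fix t :: real
    assume "t \<in> {0<..<1}"
    then have "\<bar>1 - bessel_integral 0 t\<bar> \<le> sqrt pi * sqrt t"
      by (intro abs_one_minus_bessel_integral_0_le) simp
    then have "\<bar>ln t\<bar> * \<bar>1 - bessel_integral 0 t\<bar> \<le> \<bar>ln t\<bar> * (sqrt pi * sqrt t)"
      by (rule mult_left_mono) simp
    then show "norm (ln t * (1 - bessel_integral 0 t)) \<le> sqrt pi * (\<bar>ln t\<bar> * sqrt t)"
      by (simp add: abs_mult ac_simps)
  qed simp
  have "((\<lambda>t::real. \<bar>ln t\<bar> * sqrt t) \<longlongrightarrow> 0) (at_right 0)"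
    by real_asymp
  then show "((\<lambda>t. sqrt pi * (\<bar>ln t\<bar> * sqrt t)) \<longlongrightarrow> 0) (at_right 0)"
    by (rule tendsto_mult_right_zero)
qed

lemma bessel_integral_1_at_right_0:
  "((\<lambda>t. bessel_integral 1 t + ln t) \<longlongrightarrow> 2 * Digamma 1) (at_right 0)"
proof -
  have "((\<lambda>t. 2 * log_bessel_integral 0 t + ln t * (1 - bessel_integral 0 t))
      \<longlongrightarrow> 2 * Digamma 1 + 0) (at_right 0)"
    by (intro tendsto_intros log_bessel_integral_0_at_right_0 ln_mult_one_minus_bessel_integral_0_at_right_0)
  moreover have "\<forall>\<^sub>F t in at_right 0.
      2 * log_bessel_integral 0 t + ln t * (1 - bessel_integral 0 t) = bessel_integral 1 t + ln t"
  proof (rule eventually_at_rightI[of 0 1])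
    fix t :: real
    assume "t \<in> {0<..<1}"
    then show "2 * log_bessel_integral 0 t + ln t * (1 - bessel_integral 0 t) = bessel_integral 1 t + ln t"
      using bessel_integral_1_eq[of t] by (simp add: algebra_simps)
  qed simp
  ultimately show ?thesis
    by (simp add: Lim_transform_eventually)
qed

lemma one_minus_bessel_integral_0_asymp:
  "(\<lambda>t. 1 - bessel_integral 0 t - t * (Digamma 1 + Digamma 2 - ln t)) \<in> o[at_right 0](\<lambda>t. t)"
proof (rule smalloI_tendsto)
  have psi2: "Digamma 2 = Digamma 1 + (1::real)"
    using Digamma_plus1[of "1::real"] by simp
  have nonzero: "\<forall>\<^sub>F t in at_right 0. (t::real) \<noteq> 0"
    by (rule eventually_at_rightI[of 0 1]) auto
  show "((\<lambda>t. (1 - bessel_integral 0 t - t * (Digamma 1 + Digamma 2 - ln t)) / t) \<longlongrightarrow> 0) (at_right 0)"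
  proof (rule lhopital_right_0[where f' = "\<lambda>t. bessel_integral 1 t + ln t - 2 * Digamma 1" and g' = "\<lambda>_. 1"])
    have "((\<lambda>t::real. t * (Digamma 1 + Digamma 2 - ln t)) \<longlongrightarrow> 0) (at_right 0)"
      by real_asymp
    then have "((\<lambda>t. 1 - bessel_integral 0 t - t * (Digamma 1 + Digamma 2 - ln t))
        \<longlongrightarrow> 1 - 1 - 0) (at_right 0)"
      by (intro tendsto_diff tendsto_const bessel_integral_0_at_right_0)
    then show "((\<lambda>t. 1 - bessel_integral 0 t - t * (Digamma 1 + Digamma 2 - ln t)) \<longlongrightarrow> 0) (at_right 0)"
      by simp
    show "\<forall>\<^sub>F t in at_right 0. ((\<lambda>t. 1 - bessel_integral 0 t - t * (Digamma 1 + Digamma 2 - ln t))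
        has_real_derivative bessel_integral 1 t + ln t - 2 * Digamma 1) (at t)"
      by (intro eventually_at_rightI[of 0 1])
         (auto intro!: derivative_eq_intros bessel_integral_deriv simp: psi2 field_simps)
    show "((\<lambda>t. (bessel_integral 1 t + ln t - 2 * Digamma 1) / 1) \<longlongrightarrow> 0) (at_right 0)"
      using tendsto_diff[OF bessel_integral_1_at_right_0 tendsto_const[of "2 * Digamma 1"]] by simp
    show "\<forall>\<^sub>F t in at_right 0. ((\<lambda>t. t) has_real_derivative 1) (at t)"
      by (simp add: DERIV_ident)
  qed (simp_all add: tendsto_ident_at nonzero)
  show "\<forall>\<^sub>F t in at_right 0. (t::real) \<noteq> 0"
    by (rule nonzero)
qed

section \<open>The generalized-K distribution\<close>

lemma gamma_unit_density_1: "gamma_unit_density 1 x = indicator {0<..} x * exp (-x)"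
  by (simp add: gamma_unit_density_def indicator_def)

lemma genK_cdf_1_1_eq:
  assumes gd: "gd > 0" and y: "y > 0"
  shows "genK_cdf 1 1 gd y = 1 - bessel_integral 0 (y / gd)"
proof -
  have inner: "(LINT v|lborel. gamma_unit_density 1 u * gamma_unit_density 1 v * indicator {..y} (gd * u * v))
      = indicator {0<..} u * exp (-u) - indicator {0<..} u * exp (-u - (y / gd) / u)" for u :: real
  proof (cases "u > 0")
    case True
    have "gamma_unit_density 1 u * gamma_unit_density 1 v * indicator {..y} (gd * u * v)
        = exp (-u) * (indicator {0<..y / (gd * u)} v * exp (-v))" for v
      using gd True by (auto simp: gamma_unit_density_1 indicator_def field_simps)
    then have "(LINT v|lborel. gamma_unit_density 1 u * gamma_unit_density 1 v * indicator {..y} (gd * u * v))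
        = exp (-u) * (1 - exp (- (y / (gd * u))))"
      using gd y True by (simp add: integral_exp_Ioc)
    then show ?thesis
      using True unfolding exp_minus_minus_div[of u "y / gd"] by (simp add: algebra_simps)
  qed (simp add: gamma_unit_density_1)
  have "genK_cdf 1 1 gd y = (LINT u|lborel. indicator {0<..} u * exp (-u) - indicator {0<..} u * exp (-u - (y / gd) / u))"
    unfolding genK_cdf_def inner ..
  also have "\<dots> = 1 - bessel_integral 0 (y / gd)"
    using integrable_bessel_integrand[of "y / gd" 0] gd y
    by (simp add: bessel_integral_def integrable_exp_Ioi integral_exp_Ioi)
  finally show ?thesis .
qed

lemma deriv2_genK_cdf_1_1_affine:
  fixes c lam gd x0 :: real
  assumes gd: "gd > 0" and x0: "c + lam * x0 > 0"
  shows "deriv (deriv (\<lambda>x. genK_cdf 1 1 gd (c + lam * x))) x0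
    = - ((lam / gd)\<^sup>2 * bessel_integral 2 ((c + lam * x0) / gd))"
proof -
  define U where "U = {x. 0 < c + lam * x}"
  have U: "open U" "x0 \<in> U"
    using x0 by (auto simp: U_def intro!: open_Collect_less continuous_intros)
  let ?w = "\<lambda>x. (c + lam * x) / gd"
  have w: "(?w has_real_derivative lam / gd) (at x)" for x
    using gd by (auto intro!: derivative_eq_intros)
  have w_pos: "?w x > 0" if "x \<in> U" for x
    using that gd by (simp add: U_def)
  have first_deriv: "((\<lambda>x. genK_cdf 1 1 gd (c + lam * x)) has_real_derivative lam / gd * bessel_integral 1 (?w x)) (at x)"
    if x: "x \<in> U" for x
  proof (rule has_field_derivative_transform_within_open[OF _ U(1) x])
    have "((\<lambda>x. 1 - bessel_integral 0 (?w x)) has_real_derivative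
        0 - (- bessel_integral (Suc 0) (?w x) * (lam / gd))) (at x)"
      by (intro DERIV_diff DERIV_const DERIV_chain2[OF bessel_integral_deriv[OF w_pos[OF x]] w])
    then show "((\<lambda>x. 1 - bessel_integral 0 (?w x)) has_real_derivative lam / gd * bessel_integral 1 (?w x)) (at x)"
      by (simp add: mult.commute)
    show "1 - bessel_integral 0 (?w y) = genK_cdf 1 1 gd (c + lam * y)" if "y \<in> U" for y
      using genK_cdf_1_1_eq[OF gd] that by (simp add: U_def)
  qed
  have "((\<lambda>x. lam / gd * bessel_integral 1 (?w x)) has_real_derivative
      lam / gd * (- bessel_integral (Suc 1) (?w x0) * (lam / gd))) (at x0)"
    by (intro DERIV_cmult DERIV_chain2[OF bessel_integral_deriv[OF w_pos[OF U(2)]] w])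
  then have "(deriv (\<lambda>x. genK_cdf 1 1 gd (c + lam * x)) has_real_derivative
      lam / gd * (- bessel_integral 2 (?w x0) * (lam / gd))) (at x0)"
    unfolding Suc_1 by (rule has_field_derivative_transform_within_open[OF _ U])
       (simp_all add: DERIV_imp_deriv[OF first_deriv])
  then show ?thesis
    by (simp add: DERIV_imp_deriv power2_eq_square)
qed

lemma gamma_unit_density_moment:
  fixes k :: real and j :: nat
  assumes k: "k > 0"
  shows "integrable lborel (\<lambda>u. gamma_unit_density k u * u ^ j)"
    and "(LINT u|lborel. gamma_unit_density k u * u ^ j) = Gamma (k + j) / (Gamma k * k ^ j)"
proof -
  define g where "g v = indicator {0<..} v * (v powr (k + j - 1) * exp (-v))" for v :: real
  define C where "C = k powr k / (Gamma k * k powr (k + j - 1))"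
  have g: "integrable lborel g" "integral\<^sup>L lborel g = Gamma (k + j)"
    unfolding g_def using k by (simp_all add: Gamma_lborel_integral add_pos_nonneg)
  have scale: "gamma_unit_density k u * u ^ j = C * g (0 + k * u)" for u
  proof (cases "u > 0")
    case True
    have "(k * u) powr (k + j - 1) = k powr (k + j - 1) * (u powr (k - 1) * u ^ j)"
      using k True by (simp add: powr_mult powr_add[symmetric] powr_realpow[symmetric] algebra_simps)
    then show ?thesis
      using k True Gamma_real_pos[OF k] by (simp add: gamma_unit_density_def g_def C_def field_simps)
  next
    case False
    then show ?thesis
      using k by (simp add: gamma_unit_density_def g_def zero_less_mult_iff)
  qed
  show "integrable lborel (\<lambda>u. gamma_unit_density k u * u ^ j)"
    unfolding scale using k by (intro integrable_mult_right lborel_integrable_real_affine g) simp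
  have "k powr (k + j - 1) * k = k powr (1 + (k + j - 1))"
    using k by (simp add: powr_mult_base mult.commute)
  also have "\<dots> = k powr k * k ^ j"
    using k by (simp add: powr_add powr_realpow)
  finally have "k powr (k + j - 1) * k = k powr k * k ^ j" .
  then have "C / k = 1 / (Gamma k * k ^ j)"
    unfolding C_def divide_divide_eq_left mult.assoc using k by simp
  moreover have "(LINT u|lborel. gamma_unit_density k u * u ^ j) = C * Gamma (k + j) / k"
    unfolding scale integral_mult_right_zero
    using lborel_integral_real_affine[of k g 0] g(2) k by simp
  ultimately show "(LINT u|lborel. gamma_unit_density k u * u ^ j) = Gamma (k + j) / (Gamma k * k ^ j)"
    by (metis times_divide_eq_left mult_1)
qed

lemma gamma_unit_density_quadratic:
  fixes k A B C :: real
  assumes k: "k > 0"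
  shows "integrable lborel (\<lambda>u. gamma_unit_density k u * (A * u\<^sup>2 + B * u + C))"
    and "(LINT u|lborel. gamma_unit_density k u * (A * u\<^sup>2 + B * u + C)) = A * ((k + 1) / k) + B + C"
proof -
  let ?m = "\<lambda>j u. gamma_unit_density k u * u ^ j"
  have i: "integrable lborel (?m j)" for j
    by (rule gamma_unit_density_moment(1)[OF k])
  have k_Gamma: "k \<notin> \<int>\<^sub>\<le>\<^sub>0" "k + 1 \<notin> \<int>\<^sub>\<le>\<^sub>0" "Gamma k \<noteq> 0"
    using k Gamma_real_pos[OF k] by (auto simp del: Gamma_real_pos)
  have Gamma_k2: "Gamma (k + 2) = (k + 1) * (k * Gamma k)"
    using Gamma_plus1[OF k_Gamma(2)] Gamma_plus1[OF k_Gamma(1)] by (simp add: add.assoc)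
  have "integral\<^sup>L lborel (?m 2) = Gamma (k + 2) / (Gamma k * k\<^sup>2)"
    using gamma_unit_density_moment(2)[OF k, of 2] by simp
  also have "\<dots> = (k + 1) / k"
    unfolding Gamma_k2 using k k_Gamma(3) by (simp add: field_simps power2_eq_square)
  finally have m2: "integral\<^sup>L lborel (?m 2) = (k + 1) / k" .
  have m01: "integral\<^sup>L lborel (?m 0) = 1" "integral\<^sup>L lborel (?m 1) = 1"
    using gamma_unit_density_moment(2)[OF k, of 0] gamma_unit_density_moment(2)[OF k, of 1]
      Gamma_plus1[OF k_Gamma(1)] k k_Gamma(3)
    by (simp_all add: field_simps)
  have eq: "(\<lambda>u. gamma_unit_density k u * (A * u\<^sup>2 + B * u + C)) = (\<lambda>u. A * ?m 2 u + B * ?m 1 u + C * ?m 0 u)"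
    by (simp add: fun_eq_iff algebra_simps)
  show "integrable lborel (\<lambda>u. gamma_unit_density k u * (A * u\<^sup>2 + B * u + C))"
    unfolding eq by (intro Bochner_Integration.integrable_add integrable_mult_right i)
  show "(LINT u|lborel. gamma_unit_density k u * (A * u\<^sup>2 + B * u + C)) = A * ((k + 1) / k) + B + C"
    unfolding eq
      Bochner_Integration.integral_add[OF Bochner_Integration.integrable_add[OF integrable_mult_right[OF i]
        integrable_mult_right[OF i]] integrable_mult_right[OF i]]
      Bochner_Integration.integral_add[OF integrable_mult_right[OF i] integrable_mult_right[OF i]]
      integral_mult_right_zero m01 m2
    by simp
qed

lemma genK_var_eq:
  fixes k m g :: real
  assumes k: "k > 0" and m: "m > 0"
  shows "genK_var k m g = g\<^sup>2 * ((k + 1) * (m + 1) / (k * m) - 1)"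
proof -
  let ?d = gamma_unit_density
  have inner: "(LINT v|lborel. ?d k u * ?d m v * (g * u * v - g)\<^sup>2)
      = ?d k u * ((g\<^sup>2 * ((m + 1) / m)) * u\<^sup>2 + (- 2 * g\<^sup>2) * u + g\<^sup>2)" for u
  proof -
    have integrand: "(\<lambda>v. ?d k u * ?d m v * (g * u * v - g)\<^sup>2)
        = (\<lambda>v. ?d k u * (?d m v * ((g * u)\<^sup>2 * v\<^sup>2 + (- 2 * g\<^sup>2 * u) * v + g\<^sup>2)))"
      by (simp add: fun_eq_iff power2_eq_square algebra_simps)
    show ?thesis
      unfolding integrand integral_mult_right_zero gamma_unit_density_quadratic(2)[OF m]
      by (simp add: power2_eq_square algebra_simps)
  qed
  have "genK_var k m g = (LINT u|lborel. ?d k u * ((g\<^sup>2 * ((m + 1) / m)) * u\<^sup>2 + (- 2 * g\<^sup>2) * u + g\<^sup>2))"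
    unfolding genK_var_def inner ..
  also have "\<dots> = g\<^sup>2 * ((m + 1) / m) * ((k + 1) / k) + - 2 * g\<^sup>2 + g\<^sup>2"
    by (rule gamma_unit_density_quadratic(2)[OF k])
  also have "\<dots> = g\<^sup>2 * ((k + 1) * (m + 1) / (k * m) - 1)"
    using k m by (simp add: field_simps)
  finally show ?thesis .
qed

lemma P_sop_approx_eq:
  fixes Rs ke me ge gd :: real
  assumes "ke > 0" and "me > 0" and gd: "gd > 0"
  defines "lam \<equiv> 2 powr Rs"
  defines "a \<equiv> lam - 1 + lam * ge"
  assumes a: "a > 0"
  shows "P_sop_approx Rs ke me ge gd = 1 - bessel_integral 0 (a / gd)
    - ge\<^sup>2 * lam\<^sup>2 * ((ke + 1) * (me + 1) / (ke * me) - 1) / (2 * a) * bessel_integral 0 (a / gd) / gd"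
proof -
  have "P_sop_approx Rs ke me ge gd = genK_cdf 1 1 gd a
      + genK_var ke me ge / 2 * deriv (deriv (\<lambda>x. genK_cdf 1 1 gd (lam - 1 + lam * x))) ge"
    unfolding P_sop_approx_def Let_def lam_def[symmetric] a_def[symmetric] ..
  also have "deriv (deriv (\<lambda>x. genK_cdf 1 1 gd (lam - 1 + lam * x))) ge
      = - ((lam / gd)\<^sup>2 * bessel_integral 2 (a / gd))"
    by (rule deriv2_genK_cdf_1_1_affine[OF gd, of "lam - 1" lam ge, folded a_def, OF a])
  also have "bessel_integral 2 (a / gd) = bessel_integral 0 (a / gd) * gd / a"
    using bessel_integral_2_eq[of "a / gd"] a gd by (simp add: field_simps)
  also have "genK_cdf 1 1 gd a = 1 - bessel_integral 0 (a / gd)"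
    by (rule genK_cdf_1_1_eq[OF gd a])
  finally show ?thesis
    using a gd by (simp add: genK_var_eq[OF \<open>ke > 0\<close> \<open>me > 0\<close>] field_simps power2_eq_square)
qed

theorem mainTheorem7:
  fixes Rs ke me ge :: real
  assumes "Rs > 0" and "ke > 0" and "me > 0" and "ge > 0"
  defines "lam \<equiv> 2 powr Rs"
  defines "a \<equiv> lam - 1 + lam * ge"
  shows "(\<lambda>gd. P_sop_approx Rs ke me ge gd
            - inverse gd * ((Digamma 1 + Digamma 2 - ln (a / gd)) / inverse a
                 - ge\<^sup>2 * lam\<^sup>2 * ((ke + 1) * (me + 1) / (ke * me) - 1) / (2 * a)))
         \<in> o[at_top](\<lambda>gd. inverse gd)"
proof -
  have "lam > 1"
    unfolding lam_def using \<open>Rs > 0\<close> by simp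
  then have a: "a > 0"
    unfolding a_def using \<open>ge > 0\<close> by (intro add_pos_pos mult_pos_pos) auto
  define G where "G = bessel_integral 0"
  define R where "R t = 1 - G t - t * (Digamma 1 + Digamma 2 - ln t)" for t
  define c where "c = ge\<^sup>2 * lam\<^sup>2 * ((ke + 1) * (me + 1) / (ke * me) - 1) / (2 * a)"
  have P_sop: "P_sop_approx Rs ke me ge gd = 1 - G (a / gd) - c * G (a / gd) / gd" if "gd > 0" for gd
    using P_sop_approx_eq[where Rs = Rs and ge = ge, OF assms(2,3) that, folded lam_def a_def, OF a]
    by (simp only: G_def c_def)
  have split: "\<forall>\<^sub>F gd in at_top. P_sop_approx Rs ke me ge gd
      - inverse gd * ((Digamma 1 + Digamma 2 - ln (a / gd)) / inverse a - c)
      = R (a / gd) + c * (1 - G (a / gd)) * inverse gd"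
    using eventually_gt_at_top[of 0]
    by eventually_elim (use a in \<open>simp add: P_sop R_def field_simps\<close>)
  have t: "filterlim (\<lambda>gd. a / gd) (at_right 0) at_top"
    using a by real_asymp
  have "(\<lambda>gd. R (a / gd)) \<in> o[at_top](\<lambda>gd. a * inverse gd)"
    using landau_o.small.compose[OF one_minus_bessel_integral_0_asymp t]
    by (simp add: R_def G_def divide_inverse)
  then have R: "(\<lambda>gd. R (a / gd)) \<in> o[at_top](\<lambda>gd. inverse gd)"
    using a by simp
  have "((\<lambda>gd. c * (1 - G (a / gd))) \<longlongrightarrow> c * (1 - 1)) at_top"
    unfolding G_def by (intro tendsto_intros filterlim_compose[OF bessel_integral_0_at_right_0 t])
  then have "(\<lambda>gd. c * (1 - G (a / gd)) * inverse gd) \<in> o[at_top](\<lambda>gd. 1 * inverse gd)"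
    by (intro landau_o.small_big_mult smalloI_tendsto) auto
  then show ?thesis
    unfolding c_def[symmetric] using landau_o.small.in_cong[OF split] R by (simp add: sum_in_smallo)
qed

end
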